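(* Let $(S,\mathcal{S})$ be a measurable space with $\Delta\in\mathcal{S}\otimes\mathcal{S}$, and let $\mathcal{R}\subseteq \mathcal{S}$ be a ring of sets with $\sigma(\mathcal{R})=\mathcal{S}$. If $\pi_{1},\pi_{2}: \Omega\to C(S)$ are two cr-sets satisfying $P(\pi_{1}\cap A\neq \emptyset)=P(\pi_{2}\cap A\neq \emptyset)$ for all $A\in\mathcal{R}$, and if $\pi_{1}$ is $\sigma$-finite on $\mathcal{R}$, then $P_{\pi_{1}}=P_{\pi_{2}}$.
   Context: $\Delta=\{(x,x)\mid x\in S\}$ is the diagonal of $S\times S$. $(\Omega,\mathcal{F},P)$ is a probability space. $C(S)$ denotes the set of all countable (finite or denumerable) subsets of $S$. For $A\subseteq S$, $N_A:C(S)\to\mathbb{N}_0\cup\{\infty\}$, $M\mapsto |A\cap M|$. $\mathcal{C}(\mathcal{S})$ is the smallest $\sigma$-field on $C(S)$ making all $N_A$, $A\in\mathcal{S}$, measurable. A cr-set is an $\mathcal{F}$-$\mathcal{C}(\mathcal{S})$ measurable map $\pi:\Omega\to C(S)$; $P_\pi$ denotes its law. A map $\tau:\Omega\to C(S)$ is $\sigma$-finite on $\mathcal{E}\subseteq\mathcal{S}$ if there are $A_n\in\mathcal{E}$, $n\in\mathbb{N}$, with $S=\bigcup_n A_n$ such that $|\tau(\omega)\cap A_n|<\infty$ for all $\omega\in\Omega$ and all $n$. *)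

theory Defs
  imports "HOL-Probability.Probability"
begin

definition cnt_sets :: "'a measure \<Rightarrow> 'a set set" where
  "cnt_sets M = {X. countable X \<and> X \<subseteq> space M}"

definition cnt_N :: "'a set \<Rightarrow> 'a set \<Rightarrow> enat" where
  "cnt_N A X = (if finite (A \<inter> X) then enat (card (A \<inter> X)) else \<infinity>)"

definition cr_space :: "'a measure \<Rightarrow> 'a set measure" where
  "cr_space M = sigma (cnt_sets M)
     {{X \<in> cnt_sets M. cnt_N A X \<in> B} | A B. A \<in> sets M}"

definition cr_sigma_finite_on :: "'a measure \<Rightarrow> 'b set \<Rightarrow> ('b \<Rightarrow> 'a set) \<Rightarrow> 'a set set \<Rightarrow> bool" where
  "cr_sigma_finite_on M \<Omega> \<tau> E \<longleftrightarrow>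
     (\<exists>An :: nat \<Rightarrow> 'a set. range An \<subseteq> E \<and> space M = (\<Union>n. An n) \<and>
        (\<forall>\<omega>\<in>\<Omega>. \<forall>n. finite (\<tau> \<omega> \<inter> An n)))"

end

theory Submission
  imports Defs
begin

(* Let G be the sigma-algebra on C(S) generated by the avoidance events {X. X \<inter> A = {}}, A \<in> R
   ("avoid_space").  Since R is closed under unions these events are intersection-stable, so
   equal hitting probabilities give equal laws of \<pi>1 and \<pi>2 on G.  The rest of the proof
   transfers this equality from G to the full sigma-algebra \<C>(\<S>) on C(S) generated by the counts N_A:

   1. Measurability of the diagonal yields a countable family R0 \<subseteq> R separating the points of S.
   2. With R0, every count N_B, B \<in> R, is G-measurable: N_B(X) \<ge> k iff X hits k pairwise
      disjoint "atoms" of B, each cut out by finitely many sets of R0 (countably many choices).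
   3. Sigma-finiteness gives a disjoint cover D of S by sets of R on which \<pi>1 is locally finite.
      On the set F of such locally finite configurations a Dynkin argument extends
      measurability of the counts from R to all of sets M, so E \<inter> F \<in> G for all E \<in> \<C>(\<S>).
   4. F \<in> G carries \<pi>1; by equality on G it carries \<pi>2 almost surely, hence the laws of
      \<pi>1 and \<pi>2 agree on \<C>(\<S>). *)

definition separates_points :: "'a set set \<Rightarrow> 'a set \<Rightarrow> bool" where
  "separates_points C \<Omega> \<longleftrightarrow> (\<forall>x\<in>\<Omega>. \<forall>y\<in>\<Omega>. x \<noteq> y \<longrightarrow> (\<exists>c\<in>C. (x \<in> c) \<noteq> (y \<in> c)))"

lemma sigma_sets_countable_generator:
  assumes "D \<in> sigma_sets \<Omega> G"
  shows "\<exists>G0\<subseteq>G. countable G0 \<and> D \<in> sigma_sets \<Omega> G0"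
  using assms
proof induction
  case (Basic a)
  then show ?case by (intro exI[of _ "{a}"]) auto
next
  case Empty
  then show ?case by (intro exI[of _ "{}"]) (auto intro: sigma_sets.Empty)
next
  case (Compl a)
  then show ?case by (auto intro: sigma_sets.Compl)
next
  case (Union a)
  then obtain G0 where G0: "\<And>i. G0 i \<subseteq> G \<and> countable (G0 i) \<and> a i \<in> sigma_sets \<Omega> (G0 i)"
    by metis
  have "a i \<in> sigma_sets \<Omega> (\<Union>i. G0 i)" for i
    using G0[of i] sigma_sets_mono'[of "G0 i" "\<Union>i. G0 i"] by blast
  then have "(\<Union>i. a i) \<in> sigma_sets \<Omega> (\<Union>i. G0 i)"
    by (rule sigma_sets.Union)
  then show ?case using G0 by (intro exI[of _ "\<Union>i. G0 i"]) auto
qed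

lemma sigma_sets_preserves_inseparability:
  assumes "D \<in> sigma_sets \<Omega> S" "x \<in> \<Omega>" "y \<in> \<Omega>" "\<forall>s\<in>S. (x \<in> s) \<longleftrightarrow> (y \<in> s)"
  shows "(x \<in> D) \<longleftrightarrow> (y \<in> D)"
  using assms(1) by induction (use assms in auto)

text \<open>If the diagonal is product-measurable, then it is generated by countably many measurable
  rectangles, and their sides form a countable separating family.\<close>
lemma separating_sides_of_diagonal:
  fixes M :: "'a measure"
  assumes diag: "{(x, x) | x. x \<in> space M} \<in> sets (M \<Otimes>\<^sub>M M)"
  shows "\<exists>C\<subseteq>sets M. countable C \<and> separates_points C (space M)"
proof -
  let ?\<Delta> = "{(x, x) | x. x \<in> space M}"
  have "?\<Delta> \<in> sigma_sets (space M \<times> space M) {a \<times> b | a b. a \<in> sets M \<and> b \<in> sets M}"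
    using diag by (simp add: sets_pair_measure)
  then obtain G where G: "G \<subseteq> {a \<times> b | a b. a \<in> sets M \<and> b \<in> sets M}" "countable G"
      "?\<Delta> \<in> sigma_sets (space M \<times> space M) G"
    by (blast dest: sigma_sets_countable_generator)
  have rect: "(p \<in> g) \<longleftrightarrow> fst p \<in> fst ` g \<and> snd p \<in> snd ` g"
    and sides: "fst ` g \<in> sets M" "snd ` g \<in> sets M" if g: "g \<in> G" for g p
  proof -
    obtain a b where "g = a \<times> b" "a \<in> sets M" "b \<in> sets M" using G(1) g by blast
    then show "(p \<in> g) \<longleftrightarrow> fst p \<in> fst ` g \<and> snd p \<in> snd ` g"
      "fst ` g \<in> sets M" "snd ` g \<in> sets M"
      by (auto simp: mem_Times_iff)
  qed
  define C where "C = (\<lambda>g. fst ` g) ` G \<union> (\<lambda>g. snd ` g) ` G"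
  have "separates_points C (space M)"
    unfolding separates_points_def
  proof (intro ballI impI)
    fix x y assume xy: "x \<in> space M" "y \<in> space M" "x \<noteq> y"
    show "\<exists>c\<in>C. (x \<in> c) \<noteq> (y \<in> c)"
    proof (rule ccontr)
      assume "\<not> (\<exists>c\<in>C. (x \<in> c) \<noteq> (y \<in> c))"
      then have "(x \<in> snd ` g) \<longleftrightarrow> (y \<in> snd ` g)" if "g \<in> G" for g
        using that unfolding C_def by blast
      then have "\<forall>g\<in>G. ((x, x) \<in> g) \<longleftrightarrow> ((x, y) \<in> g)"
        using rect[of _ "(x, x)"] rect[of _ "(x, y)"] by simp
      then have "((x, x) \<in> ?\<Delta>) \<longleftrightarrow> ((x, y) \<in> ?\<Delta>)"
        using xy by (intro sigma_sets_preserves_inseparability[OF G(3)]) auto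
      then show False using xy by auto
    qed
  qed
  moreover have "C \<subseteq> sets M" "countable C"
    using sides G(2) unfolding C_def by auto
  ultimately show ?thesis by blast
qed

lemma countable_separating_generators:
  assumes "C \<subseteq> sigma_sets \<Omega> R" "countable C" "separates_points C \<Omega>"
  shows "\<exists>R0\<subseteq>R. countable R0 \<and> separates_points R0 \<Omega>"
proof -
  have "\<forall>c\<in>C. \<exists>Rc\<subseteq>R. countable Rc \<and> c \<in> sigma_sets \<Omega> Rc"
    using assms(1) sigma_sets_countable_generator by blast
  then obtain Rc where Rc: "\<And>c. c \<in> C \<Longrightarrow> Rc c \<subseteq> R \<and> countable (Rc c) \<and> c \<in> sigma_sets \<Omega> (Rc c)"
    by metis
  define R0 where "R0 = (\<Union>c\<in>C. Rc c)"
  have "separates_points R0 \<Omega>"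
    unfolding separates_points_def
  proof (intro ballI impI)
    fix x y assume xy: "x \<in> \<Omega>" "y \<in> \<Omega>" "x \<noteq> y"
    then obtain c where c: "c \<in> C" "(x \<in> c) \<noteq> (y \<in> c)"
      using assms(3) unfolding separates_points_def by blast
    then show "\<exists>r\<in>R0. (x \<in> r) \<noteq> (y \<in> r)"
      using sigma_sets_preserves_inseparability[of c \<Omega> "Rc c" x y] Rc[OF c(1)] xy
      unfolding R0_def by blast
  qed
  moreover have "R0 \<subseteq> R" "countable R0"
    using Rc assms(2) unfolding R0_def by auto
  ultimately show ?thesis by blast
qed

lemma separating_generators_of_diagonal:
  fixes M :: "'a measure"
  assumes diag: "{(x, x) | x. x \<in> space M} \<in> sets (M \<Otimes>\<^sub>M M)"
    and gen: "sigma_sets (space M) R = sets M"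
  shows "\<exists>R0\<subseteq>R. countable R0 \<and> separates_points R0 (space M)"
proof -
  obtain C where C: "C \<subseteq> sets M" "countable C" "separates_points C (space M)"
    using separating_sides_of_diagonal[OF diag] by blast
  have "C \<subseteq> sigma_sets (space M) R" using C(1) gen by simp
  then show ?thesis using countable_separating_generators[OF _ C(2,3)] by blast
qed

definition atom :: "'a set \<Rightarrow> ('a set \<times> bool) list \<Rightarrow> 'a set" where
  "atom B L = B \<inter> {x. \<forall>(r, b)\<in>set L. (x \<in> r) = b}"

lemma (in ring_of_sets) atom_in_ring:
  assumes B: "B \<in> M" and L: "set L \<subseteq> M \<times> UNIV"
  shows "atom B L \<in> M"
  using L
proof (induction L)
  case Nil
  then show ?case using B by (simp add: atom_def)
next
  case (Cons a L)
  obtain r b where a: "a = (r, b)" by force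
  have "r \<in> M" "atom B L \<in> M" using Cons a by auto
  moreover have "atom B (a # L) = (if b then atom B L \<inter> r else atom B L - r)"
    unfolding a atom_def by auto
  ultimately show ?case by auto
qed

lemma cnt_N_ge_of_disjoint_hits:
  assumes sub: "\<And>j. j < k \<Longrightarrow> U j \<subseteq> B"
    and disj: "\<And>i j. i < k \<Longrightarrow> j < k \<Longrightarrow> i \<noteq> j \<Longrightarrow> U i \<inter> U j = {}"
    and hit: "\<And>j. j < k \<Longrightarrow> X \<inter> U j \<noteq> {}"
  shows "enat k \<le> cnt_N B X"
proof -
  have "\<forall>j<k. \<exists>x. x \<in> X \<inter> U j"
    using hit by blast
  then obtain p where p: "\<And>j. j < k \<Longrightarrow> p j \<in> X \<inter> U j"
    by metis
  have inj: "inj_on p {..<k}"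
  proof (rule inj_onI)
    fix i j assume "i \<in> {..<k}" "j \<in> {..<k}" "p i = p j"
    then show "i = j" using p[of i] p[of j] disj[of i j] by auto
  qed
  have img: "p ` {..<k} \<subseteq> B \<inter> X"
    using p sub by blast
  show ?thesis
  proof (cases "finite (B \<inter> X)")
    case True
    have "k = card (p ` {..<k})" using card_image[OF inj] by simp
    also have "\<dots> \<le> card (B \<inter> X)" using True img by (rule card_mono)
    finally show ?thesis using True by (simp add: cnt_N_def)
  qed (simp add: cnt_N_def)
qed

lemma disjoint_atoms_of_cnt_N_ge:
  assumes sep: "separates_points R0 B" and k: "enat k \<le> cnt_N B X"
  shows "\<exists>Ls. length Ls = k \<and> (\<forall>L\<in>set Ls. set L \<subseteq> R0 \<times> UNIV) \<and>
     (\<forall>i<k. \<forall>j<k. i \<noteq> j \<longrightarrow> atom B (Ls!i) \<inter> atom B (Ls!j) = {}) \<and>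
     (\<forall>j<k. X \<inter> atom B (Ls!j) \<noteq> {})"
proof -
  obtain F where F: "F \<subseteq> B \<inter> X" "finite F" "card F = k"
  proof (cases "finite (B \<inter> X)")
    case True
    then have "k \<le> card (B \<inter> X)" using k by (simp add: cnt_N_def)
    then show ?thesis using that obtain_subset_with_card_n by metis
  next
    case False
    then show ?thesis using that infinite_arbitrarily_large by metis
  qed
  obtain ps where ps: "set ps = F" "distinct ps" "length ps = k"
  proof -
    obtain ps where "set ps = F" "distinct ps" using finite_distinct_list[OF F(2)] by blast
    moreover from this have "length ps = k" using F(3) distinct_card by metis
    ultimately show ?thesis using that by blast
  qed
  define s where "s x y = (SOME r. r \<in> R0 \<and> (x \<in> r) \<noteq> (y \<in> r))" for x y
  have s: "s x y \<in> R0 \<and> (x \<in> s x y) \<noteq> (y \<in> s x y)" if "x \<in> B" "y \<in> B" "x \<noteq> y" for x y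
    unfolding s_def by (rule someI_ex) (use sep that in \<open>auto simp: separates_points_def\<close>)
  have "finite {(x, y) \<in> F \<times> F. x \<noteq> y}"
    by (rule finite_subset[of _ "F \<times> F"]) (use F(2) in auto)
  then have "finite ((\<lambda>(x, y). s x y) ` {(x, y) \<in> F \<times> F. x \<noteq> y})"
    by (rule finite_imageI)
  then obtain rs where rs: "set rs = (\<lambda>(x, y). s x y) ` {(x, y) \<in> F \<times> F. x \<noteq> y}"
    by (meson finite_list)
  define Ls where "Ls = map (\<lambda>p. map (\<lambda>r. (r, p \<in> r)) rs) ps"
  have atom_Ls: "atom B (Ls!j) = {x \<in> B. \<forall>r\<in>set rs. (x \<in> r) = (ps!j \<in> r)}" if "j < k" for j
    using that ps(3) by (auto simp: Ls_def atom_def)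
  have ps_in: "ps!j \<in> F" if "j < k" for j
    using that ps(1,3) nth_mem by blast
  have "length Ls = k"
    using ps(3) by (simp add: Ls_def)
  moreover have "\<forall>L\<in>set Ls. set L \<subseteq> R0 \<times> UNIV"
  proof
    fix L assume "L \<in> set Ls"
    then have "set L \<subseteq> set rs \<times> UNIV" by (auto simp: Ls_def)
    moreover have "set rs \<subseteq> R0" using s F(1) by (auto simp: rs)
    ultimately show "set L \<subseteq> R0 \<times> UNIV" by blast
  qed
  moreover have "atom B (Ls!i) \<inter> atom B (Ls!j) = {}" if ij: "i < k" "j < k" "i \<noteq> j" for i j
  proof -
    have "ps!i \<noteq> ps!j" using ij ps(2,3) nth_eq_iff_index_eq by metis
    moreover have "ps!i \<in> B" "ps!j \<in> B" using ps_in ij F(1) by auto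
    ultimately have "(ps!i \<in> s (ps!i) (ps!j)) \<noteq> (ps!j \<in> s (ps!i) (ps!j))"
      using s by blast
    moreover have "s (ps!i) (ps!j) \<in> set rs"
      unfolding rs using ps_in[OF ij(1)] ps_in[OF ij(2)] \<open>ps!i \<noteq> ps!j\<close>
      by (intro image_eqI[of _ _ "(ps!i, ps!j)"]) auto
    ultimately show ?thesis using atom_Ls[OF ij(1)] atom_Ls[OF ij(2)] by blast
  qed
  moreover have "ps!j \<in> X \<inter> atom B (Ls!j)" if "j < k" for j
    using ps_in[OF that] F(1) atom_Ls[OF that] by auto
  ultimately show ?thesis by blast
qed

definition avoid_space :: "'a measure \<Rightarrow> 'a set set \<Rightarrow> 'a set measure" where
  "avoid_space M R = sigma (cnt_sets M) {{X \<in> cnt_sets M. X \<inter> A = {}} | A. A \<in> R}"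

lemma space_avoid_space [simp]: "space (avoid_space M R) = cnt_sets M"
  by (simp add: avoid_space_def space_measure_of_conv)

lemma sets_avoid_space:
  "sets (avoid_space M R) = sigma_sets (cnt_sets M) {{X \<in> cnt_sets M. X \<inter> A = {}} | A. A \<in> R}"
  unfolding avoid_space_def by (rule sets_measure_of) blast

lemma avoid_event_in_avoid_space:
  "A \<in> R \<Longrightarrow> {X \<in> cnt_sets M. X \<inter> A = {}} \<in> sets (avoid_space M R)"
  unfolding sets_avoid_space by (rule sigma_sets.Basic) blast

lemma hit_event_in_avoid_space:
  assumes "A \<in> R"
  shows "{X \<in> cnt_sets M. X \<inter> A \<noteq> {}} \<in> sets (avoid_space M R)"
proof -
  have "{X \<in> cnt_sets M. X \<inter> A \<noteq> {}} = space (avoid_space M R) - {X \<in> cnt_sets M. X \<inter> A = {}}"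
    by auto
  then show ?thesis
    using sets.compl_sets[OF avoid_event_in_avoid_space[OF assms]] by simp
qed

text \<open>Step 2: the events \<open>N_B \<ge> k\<close> are countable unions of finite intersections of hitting events.\<close>
lemma cnt_N_ge_in_avoid_space:
  assumes ring: "ring_of_sets (space M) R"
    and R0: "R0 \<subseteq> R" "countable R0" "separates_points R0 (space M)"
    and B: "B \<in> R"
  shows "{X \<in> cnt_sets M. enat k \<le> cnt_N B X} \<in> sets (avoid_space M R)"
proof -
  interpret ring_of_sets "space M" R by (fact ring)
  have sepB: "separates_points R0 B"
    using R0(3) sets_into_space[OF B] unfolding separates_points_def by blast
  define LS where "LS = {Ls. length Ls = k \<and> (\<forall>L\<in>set Ls. set L \<subseteq> R0 \<times> UNIV) \<and>
       (\<forall>i<k. \<forall>j<k. i \<noteq> j \<longrightarrow> atom B (Ls!i) \<inter> atom B (Ls!j) = {})}"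
  have "countable LS"
    by (rule countable_subset[of _ "lists (lists (R0 \<times> UNIV))"]) (use R0(2) in \<open>auto simp: LS_def\<close>)
  have ge_iff: "enat k \<le> cnt_N B X \<longleftrightarrow> (\<exists>Ls\<in>LS. \<forall>j\<in>{..<k}. X \<inter> atom B (Ls!j) \<noteq> {})" for X
  proof
    assume "enat k \<le> cnt_N B X"
    from disjoint_atoms_of_cnt_N_ge[OF sepB this] obtain Ls where
      "length Ls = k" "\<forall>L\<in>set Ls. set L \<subseteq> R0 \<times> UNIV"
      "\<forall>i<k. \<forall>j<k. i \<noteq> j \<longrightarrow> atom B (Ls!i) \<inter> atom B (Ls!j) = {}"
      "\<forall>j<k. X \<inter> atom B (Ls!j) \<noteq> {}"
      by blast
    then show "\<exists>Ls\<in>LS. \<forall>j\<in>{..<k}. X \<inter> atom B (Ls!j) \<noteq> {}"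
      unfolding LS_def by blast
  next
    assume "\<exists>Ls\<in>LS. \<forall>j\<in>{..<k}. X \<inter> atom B (Ls!j) \<noteq> {}"
    then obtain Ls where "Ls \<in> LS" "\<forall>j\<in>{..<k}. X \<inter> atom B (Ls!j) \<noteq> {}"
      by blast
    then show "enat k \<le> cnt_N B X"
      by (intro cnt_N_ge_of_disjoint_hits[of k "\<lambda>j. atom B (Ls!j)"]) (auto simp: LS_def atom_def)
  qed
  have hits_in: "{X \<in> cnt_sets M. \<forall>j\<in>{..<k}. X \<inter> atom B (Ls!j) \<noteq> {}} \<in> sets (avoid_space M R)"
    if Ls: "Ls \<in> LS" for Ls
  proof -
    have "atom B (Ls!j) \<in> R" if "j < k" for j
    proof (rule atom_in_ring[OF B])
      have "Ls!j \<in> set Ls" using Ls that by (simp add: LS_def)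
      then show "set (Ls!j) \<subseteq> R \<times> UNIV" using Ls R0(1) unfolding LS_def by blast
    qed
    then have "{X \<in> space (avoid_space M R). \<forall>j\<in>{..<k}. X \<inter> atom B (Ls!j) \<noteq> {}} \<in> sets (avoid_space M R)"
      by (intro sets.sets_Collect_countable_All') (auto intro: hit_event_in_avoid_space)
    then show ?thesis by simp
  qed
  have "{X \<in> space (avoid_space M R). \<exists>Ls\<in>LS. \<forall>j\<in>{..<k}. X \<inter> atom B (Ls!j) \<noteq> {}} \<in> sets (avoid_space M R)"
    using hits_in \<open>countable LS\<close> by (intro sets.sets_Collect_countable_Ex') simp_all
  then show ?thesis using ge_iff by simp
qed

lemma measurable_enat_by_lower_sets:
  fixes f :: "'x \<Rightarrow> enat"
  assumes ge: "\<And>k. {x \<in> space N. enat k \<le> f x} \<in> sets N"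
  shows "f \<in> N \<rightarrow>\<^sub>M count_space UNIV"
proof -
  have "f -` {v} \<inter> space N \<in> sets N" for v
  proof (cases v)
    case (enat k)
    have "f x = enat k \<longleftrightarrow> enat k \<le> f x \<and> \<not> enat (Suc k) \<le> f x" for x
      by (cases "f x") auto
    then have "f -` {v} \<inter> space N = {x \<in> space N. enat k \<le> f x} - {x \<in> space N. enat (Suc k) \<le> f x}"
      using enat by auto
    then show ?thesis using ge by auto
  next
    case infinity
    have "f x = \<infinity> \<longleftrightarrow> (\<forall>k. enat k \<le> f x)" for x
      by (cases "f x") (auto, metis Suc_n_not_le_n)
    then have "f -` {v} \<inter> space N = {x \<in> space N. \<forall>k. enat k \<le> f x}"
      using infinity by auto
    then show ?thesis using ge by (auto intro: sets.sets_Collect_countable_All)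
  qed
  then show ?thesis by (subst measurable_count_space_eq_countable) auto
qed

lemma cnt_N_measurable_avoid_space:
  assumes "ring_of_sets (space M) R"
    and "R0 \<subseteq> R" "countable R0" "separates_points R0 (space M)"
    and "B \<in> R"
  shows "cnt_N B \<in> avoid_space M R \<rightarrow>\<^sub>M count_space UNIV"
  using cnt_N_ge_in_avoid_space[OF assms] by (intro measurable_enat_by_lower_sets) simp

text \<open>The number of points of \<open>X\<close> in \<open>A\<close>, as an extended non-negative real: unlike \<open>cnt_N\<close>,
  it is countably additive in \<open>A\<close> and supports subtraction of finite counts.\<close>
definition points_in :: "'a set \<Rightarrow> 'a set \<Rightarrow> ennreal" where
  "points_in A X = emeasure (count_space UNIV) (X \<inter> A)"

lemma points_in_cnt_N: "points_in A X = ennreal_of_enat (cnt_N A X)"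
  by (simp add: points_in_def cnt_N_def Int_commute)

lemma points_in_empty [simp]: "points_in {} X = 0"
  by (simp add: points_in_def)

lemma points_in_Diff:
  assumes "finite (X \<inter> B)" "A \<subseteq> B"
  shows "points_in (B - A) X = points_in B X - points_in A X"
proof -
  have "finite (X \<inter> A)"
    using assms(1) by (rule finite_subset[rotated]) (use assms(2) in blast)
  then have "emeasure (count_space UNIV) (X \<inter> B - X \<inter> A) =
      emeasure (count_space UNIV) (X \<inter> B) - emeasure (count_space UNIV) (X \<inter> A)"
    using assms(2) by (intro emeasure_Diff) auto
  moreover have "X \<inter> (B - A) = X \<inter> B - X \<inter> A" by blast
  ultimately show ?thesis by (simp add: points_in_def)
qed

lemma points_in_UN:
  assumes "disjoint_family A"
  shows "points_in (\<Union>i. A i) X = (\<Sum>i. points_in (A i) X)"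
proof -
  have disj: "disjoint_family (\<lambda>i. X \<inter> A i)"
    using assms unfolding disjoint_family_on_def by blast
  have "points_in (\<Union>i. A i) X = emeasure (count_space UNIV) (\<Union>i. X \<inter> A i)"
    unfolding points_in_def by (rule arg_cong[where f = "emeasure _"]) blast
  also have "\<dots> = (\<Sum>i. points_in (A i) X)"
    unfolding points_in_def
    by (rule suminf_emeasure[symmetric]) (auto intro: disj)
  finally show ?thesis .
qed

lemma cnt_N_measurable_iff_points_in:
  "cnt_N A \<in> N \<rightarrow>\<^sub>M count_space UNIV \<longleftrightarrow> points_in A \<in> borel_measurable N"
proof
  assume "cnt_N A \<in> N \<rightarrow>\<^sub>M count_space UNIV"
  then have "(\<lambda>X. ennreal_of_enat (cnt_N A X)) \<in> borel_measurable N"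
    by (rule measurable_compose) simp
  then show "points_in A \<in> borel_measurable N"
    by (simp add: points_in_cnt_N[abs_def])
next
  assume meas: "points_in A \<in> borel_measurable N"
  have "cnt_N A -` {v} \<inter> space N = points_in A -` {ennreal_of_enat v} \<inter> space N" for v
    by (auto simp: points_in_cnt_N)
  then show "cnt_N A \<in> N \<rightarrow>\<^sub>M count_space UNIV"
    using measurable_sets[OF meas] by (subst measurable_count_space_eq_countable) auto
qed

text \<open>Dynkin step: if counting points in the sets of an \<open>\<inter>\<close>-stable generator \<open>R\<close> is measurable,
  then so is counting points in \<open>A \<inter> D\<close> for every \<open>A \<in> \<sigma>(R)\<close>, on configurations that
  meet the fixed generator set \<open>D\<close> in finitely many points (complements need finite counts).\<close>
lemma points_in_measurable_on_finite_part:
  assumes stable: "Int_stable R" and R: "R \<subseteq> Pow \<Omega>" and D: "D \<in> R"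
    and R_meas: "\<And>B. B \<in> R \<Longrightarrow> points_in B \<in> borel_measurable N"
    and fin: "\<And>X. X \<in> F \<Longrightarrow> finite (X \<inter> D)"
    and A: "A \<in> sigma_sets \<Omega> R"
  shows "points_in (A \<inter> D) \<in> borel_measurable (restrict_space N F)"
  using stable R A
proof (induction A rule: sigma_sets_induct_disjoint)
  case (basic A)
  then have "A \<inter> D \<in> R" using stable D by (auto simp: Int_stable_def)
  then show ?case by (intro measurable_restrict_space1 R_meas)
next
  case empty
  show ?case by simp
next
  case (compl A)
  have "D \<subseteq> \<Omega>" using D R by blast
  then have "(\<Omega> - A) \<inter> D = D - A \<inter> D" by blast
  then have eq: "points_in ((\<Omega> - A) \<inter> D) X = points_in D X - points_in (A \<inter> D) X"
    if "X \<in> space (restrict_space N F)" for X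
    using that points_in_Diff[OF fin] by (simp add: space_restrict_space)
  have "(\<lambda>X. points_in D X - points_in (A \<inter> D) X) \<in> borel_measurable (restrict_space N F)"
    using measurable_restrict_space1[OF R_meas[OF D]] compl.IH
    by (rule borel_measurable_minus_ennreal)
  then show ?case by (subst measurable_cong[OF eq])
next
  case (union A)
  have "disjoint_family (\<lambda>i. A i \<inter> D)"
    using union.hyps(1) unfolding disjoint_family_on_def by blast
  moreover have "(\<Union>i. A i) \<inter> D = (\<Union>i. A i \<inter> D)" by blast
  ultimately have "points_in ((\<Union>i. A i) \<inter> D) = (\<lambda>X. \<Sum>i. points_in (A i \<inter> D) X)"
    using points_in_UN[of "\<lambda>i. A i \<inter> D"] by auto
  then show ?case
    using union.IH by (simp only: borel_measurable_suminf_order)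
qed

text \<open>Summing over a disjoint cover \<open>D\<close> of \<open>\<Omega>\<close> by generator sets: on locally finite
  configurations, point counts in every set of \<open>\<sigma>(R)\<close> are measurable.\<close>
lemma points_in_measurable_locally_finite:
  fixes D :: "nat \<Rightarrow> 'a set"
  assumes "Int_stable R" "R \<subseteq> Pow \<Omega>"
    and D: "range D \<subseteq> R" "disjoint_family D" "(\<Union>n. D n) = \<Omega>"
    and "\<And>B. B \<in> R \<Longrightarrow> points_in B \<in> borel_measurable N"
    and "\<And>X n. X \<in> F \<Longrightarrow> finite (X \<inter> D n)"
    and A: "A \<in> sigma_sets \<Omega> R"
  shows "points_in A \<in> borel_measurable (restrict_space N F)"
proof -
  have "A = (\<Union>n. A \<inter> D n)" using sigma_sets_into_sp[OF assms(2) A] D(3) by blast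
  moreover have "disjoint_family (\<lambda>n. A \<inter> D n)"
    using D(2) unfolding disjoint_family_on_def by blast
  ultimately have "points_in A = (\<lambda>X. \<Sum>n. points_in (A \<inter> D n) X)"
    using points_in_UN[of "\<lambda>n. A \<inter> D n"] by auto
  moreover have "points_in (A \<inter> D n) \<in> borel_measurable (restrict_space N F)" for n
    using D(1) by (intro points_in_measurable_on_finite_part[OF assms(1,2) _ assms(6,7) A]) auto
  ultimately show ?thesis by (simp only: borel_measurable_suminf_order)
qed

lemma space_cr_space [simp]: "space (cr_space M) = cnt_sets M"
  by (simp add: cr_space_def space_measure_of_conv)

lemma sets_cr_space:
  "sets (cr_space M) = sigma_sets (cnt_sets M) {{X \<in> cnt_sets M. cnt_N A X \<in> B} | A B. A \<in> sets M}"
  unfolding cr_space_def by (rule sets_measure_of) blast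

text \<open>Avoidance events are cr-space events, namely \<open>N_A = 0\<close>.\<close>
lemma avoid_event_in_cr_space:
  assumes "A \<in> sets M"
  shows "{X \<in> cnt_sets M. X \<inter> A = {}} \<in> sets (cr_space M)"
proof -
  have "cnt_N A X \<in> {enat 0} \<longleftrightarrow> X \<inter> A = {}" for X
    by (cases "finite (A \<inter> X)") (auto simp: cnt_N_def Int_commute)
  then have "{X \<in> cnt_sets M. X \<inter> A = {}} = {X \<in> cnt_sets M. cnt_N A X \<in> {enat 0}}"
    by blast
  moreover have "{X \<in> cnt_sets M. cnt_N A X \<in> {enat 0}} \<in>
      {{X \<in> cnt_sets M. cnt_N A X \<in> B} | A B. A \<in> sets M}"
    using assms by blast
  ultimately show ?thesis
    unfolding sets_cr_space by (auto intro: sigma_sets.Basic)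
qed

lemma measurable_avoid_space:
  assumes "R \<subseteq> sets M" and \<pi>: "\<pi> \<in> P \<rightarrow>\<^sub>M cr_space M"
  shows "\<pi> \<in> P \<rightarrow>\<^sub>M avoid_space M R"
  unfolding avoid_space_def
proof (rule measurable_measure_of)
  show "{{X \<in> cnt_sets M. X \<inter> A = {}} | A. A \<in> R} \<subseteq> Pow (cnt_sets M)" by blast
  show "\<pi> \<in> space P \<rightarrow> cnt_sets M" using measurable_space[OF \<pi>] by simp
  fix G assume "G \<in> {{X \<in> cnt_sets M. X \<inter> A = {}} | A. A \<in> R}"
  then show "\<pi> -` G \<inter> space P \<in> sets P"
    using assms(1) measurable_sets[OF \<pi> avoid_event_in_cr_space] by blast
qed

text \<open>The laws of two random sets on the avoidance \<open>\<sigma>\<close>-algebra are determined by their hitting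
  probabilities: avoidance events form an \<open>\<inter>\<close>-stable generator, as \<open>R\<close> is closed under \<open>\<union>\<close>.\<close>
lemma distr_avoid_space_eq:
  assumes P: "prob_space P" and ring: "ring_of_sets \<Omega> R"
    and \<pi>1: "\<pi>1 \<in> P \<rightarrow>\<^sub>M avoid_space M R" and \<pi>2: "\<pi>2 \<in> P \<rightarrow>\<^sub>M avoid_space M R"
    and hit: "\<And>A. A \<in> R \<Longrightarrow>
      measure P {\<omega> \<in> space P. \<pi>1 \<omega> \<inter> A \<noteq> {}} = measure P {\<omega> \<in> space P. \<pi>2 \<omega> \<inter> A \<noteq> {}}"
  shows "distr P (avoid_space M R) \<pi>1 = distr P (avoid_space M R) \<pi>2"
proof -
  interpret P: prob_space P by (fact P)
  interpret ring_of_sets \<Omega> R by (fact ring)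
  let ?E = "{{X \<in> cnt_sets M. X \<inter> A = {}} | A. A \<in> R}"
  have avoid_prob: "emeasure (distr P (avoid_space M R) \<pi>) {X \<in> cnt_sets M. X \<inter> A = {}} =
      ennreal (1 - measure P {\<omega> \<in> space P. \<pi> \<omega> \<inter> A \<noteq> {}})"
    if \<pi>: "\<pi> \<in> P \<rightarrow>\<^sub>M avoid_space M R" and A: "A \<in> R" for \<pi> A
  proof -
    have "{\<omega> \<in> space P. \<pi> \<omega> \<inter> A \<noteq> {}} = \<pi> -` {X \<in> cnt_sets M. X \<inter> A \<noteq> {}} \<inter> space P"
      using measurable_space[OF \<pi>] by auto
    then have hit_in: "{\<omega> \<in> space P. \<pi> \<omega> \<inter> A \<noteq> {}} \<in> sets P"
      using measurable_sets[OF \<pi> hit_event_in_avoid_space[OF A]] by simp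
    have "\<pi> -` {X \<in> cnt_sets M. X \<inter> A = {}} \<inter> space P = space P - {\<omega> \<in> space P. \<pi> \<omega> \<inter> A \<noteq> {}}"
      using measurable_space[OF \<pi>] by auto
    then have "emeasure (distr P (avoid_space M R) \<pi>) {X \<in> cnt_sets M. X \<inter> A = {}} =
        emeasure P (space P - {\<omega> \<in> space P. \<pi> \<omega> \<inter> A \<noteq> {}})"
      using emeasure_distr[OF \<pi> avoid_event_in_avoid_space[OF A]] by simp
    also have "\<dots> = ennreal (1 - measure P {\<omega> \<in> space P. \<pi> \<omega> \<inter> A \<noteq> {}})"
      using P.prob_compl[OF hit_in] P.emeasure_eq_measure by simp
    finally show ?thesis .
  qed
  show ?thesis
  proof (rule measure_eqI_generator_eq[where E = ?E and \<Omega> = "cnt_sets M" and A = "\<lambda>_. cnt_sets M"])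
    show "Int_stable ?E"
    proof (rule Int_stableI)
      fix a b assume "a \<in> ?E" "b \<in> ?E"
      then obtain A B where "A \<in> R" "B \<in> R"
        and "a = {X \<in> cnt_sets M. X \<inter> A = {}}" "b = {X \<in> cnt_sets M. X \<inter> B = {}}"
        by blast
      then have "A \<union> B \<in> R" "a \<inter> b = {X \<in> cnt_sets M. X \<inter> (A \<union> B) = {}}" by auto
      then show "a \<inter> b \<in> ?E" by blast
    qed
    show "?E \<subseteq> Pow (cnt_sets M)" by blast
    show "emeasure (distr P (avoid_space M R) \<pi>1) S = emeasure (distr P (avoid_space M R) \<pi>2) S"
      if "S \<in> ?E" for S
    proof -
      obtain A where "A \<in> R" "S = {X \<in> cnt_sets M. X \<inter> A = {}}" using \<open>S \<in> ?E\<close> by blast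
      then show ?thesis using avoid_prob[OF \<pi>1] avoid_prob[OF \<pi>2] hit by simp
    qed
    show "sets (distr P (avoid_space M R) \<pi>1) = sigma_sets (cnt_sets M) ?E"
      "sets (distr P (avoid_space M R) \<pi>2) = sigma_sets (cnt_sets M) ?E"
      by (simp_all add: sets_avoid_space)
    have "cnt_sets M = {X \<in> cnt_sets M. X \<inter> {} = {}}" by simp
    then show "range (\<lambda>_. cnt_sets M) \<subseteq> ?E" by blast
    show "(\<Union>i::nat. cnt_sets M) = cnt_sets M" by simp
    show "emeasure (distr P (avoid_space M R) \<pi>1) (cnt_sets M) \<noteq> \<infinity>"
      using emeasure_distr[OF \<pi>1 sets.top[of "avoid_space M R"]] P.emeasure_finite by simp
  qed
qed

text \<open>If the measurable sets of \<open>N\<close> traced on \<open>F\<close> are \<open>G\<close>-measurable and \<open>\<pi>1\<close> lives on \<open>F\<close>,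
  equal laws on \<open>G\<close> force \<open>\<pi>2\<close> to live on \<open>F\<close> almost surely, hence equal laws on \<open>N\<close>.\<close>
lemma distr_eq_from_trace:
  assumes N1: "\<pi>1 \<in> P \<rightarrow>\<^sub>M N" and N2: "\<pi>2 \<in> P \<rightarrow>\<^sub>M N"
    and G1: "\<pi>1 \<in> P \<rightarrow>\<^sub>M G" and G2: "\<pi>2 \<in> P \<rightarrow>\<^sub>M G"
    and F: "F \<in> sets G" and trace: "\<And>E. E \<in> sets N \<Longrightarrow> E \<inter> F \<in> sets G"
    and supp: "\<And>\<omega>. \<omega> \<in> space P \<Longrightarrow> \<pi>1 \<omega> \<in> F"
    and eq: "distr P G \<pi>1 = distr P G \<pi>2"
  shows "distr P N \<pi>1 = distr P N \<pi>2"
proof -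
  have outside: "space G - F \<in> sets G" using F by (rule sets.compl_sets)
  have "emeasure P (\<pi>2 -` (space G - F) \<inter> space P) = emeasure P (\<pi>1 -` (space G - F) \<inter> space P)"
    using emeasure_distr[OF G1 outside] emeasure_distr[OF G2 outside] eq by simp
  also have "\<pi>1 -` (space G - F) \<inter> space P = {}" using supp by blast
  finally have null: "\<pi>2 -` (space G - F) \<inter> space P \<in> null_sets P"
    using measurable_sets[OF G2 outside] by auto
  show ?thesis
  proof (rule measure_eqI)
    fix E assume "E \<in> sets (distr P N \<pi>1)"
    then have E: "E \<in> sets N" by simp
    have "\<pi>1 -` E \<inter> space P = \<pi>1 -` (E \<inter> F) \<inter> space P" using supp by blast
    then have "emeasure (distr P N \<pi>1) E = emeasure P (\<pi>1 -` (E \<inter> F) \<inter> space P)"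
      using emeasure_distr[OF N1 E] by simp
    also have "\<dots> = emeasure P (\<pi>2 -` (E \<inter> F) \<inter> space P)"
      using emeasure_distr[OF G1 trace[OF E]] emeasure_distr[OF G2 trace[OF E]] eq by simp
    also have "\<pi>2 -` (E \<inter> F) \<inter> space P = (\<pi>2 -` E \<inter> space P) - (\<pi>2 -` (space G - F) \<inter> space P)"
      using measurable_space[OF G2] by blast
    also have "emeasure P \<dots> = emeasure P (\<pi>2 -` E \<inter> space P)"
      by (rule emeasure_Diff_null_set[OF null measurable_sets[OF N2 E]])
    also have "\<dots> = emeasure (distr P N \<pi>2) E"
      using emeasure_distr[OF N2 E] by simp
    finally show "emeasure (distr P N \<pi>1) E = emeasure (distr P N \<pi>2) E" .
  qed simp
qed

text \<open>The trace of \<open>\<C>(\<S>)\<close> on \<open>F \<in> sets N\<close> lies in \<open>N\<close> as soon as every count \<open>N_A\<close>,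
  \<open>A \<in> \<S>\<close>, is measurable on \<open>F\<close>: then the identity is measurable from \<open>N\<close> restricted to \<open>F\<close>
  into the cr-space.\<close>
lemma cr_space_trace:
  assumes space: "space N = cnt_sets M" and F: "F \<in> sets N"
    and counts: "\<And>A. A \<in> sets M \<Longrightarrow> cnt_N A \<in> restrict_space N F \<rightarrow>\<^sub>M count_space UNIV"
    and E: "E \<in> sets (cr_space M)"
  shows "E \<inter> F \<in> sets N"
proof -
  have "(\<lambda>X. X) \<in> restrict_space N F \<rightarrow>\<^sub>M cr_space M"
    unfolding cr_space_def
  proof (rule measurable_measure_of)
    show "{{X \<in> cnt_sets M. cnt_N A X \<in> B} | A B. A \<in> sets M} \<subseteq> Pow (cnt_sets M)" by blast
    show "(\<lambda>X. X) \<in> space (restrict_space N F) \<rightarrow> cnt_sets M"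
      using space by (auto simp: space_restrict_space)
    fix G assume "G \<in> {{X \<in> cnt_sets M. cnt_N A X \<in> B} | A B. A \<in> sets M}"
    then obtain A B where A: "A \<in> sets M" and G: "G = {X \<in> cnt_sets M. cnt_N A X \<in> B}"
      by blast
    have "(\<lambda>X. X) -` G \<inter> space (restrict_space N F) = cnt_N A -` B \<inter> space (restrict_space N F)"
      using space by (auto simp: G space_restrict_space)
    then show "(\<lambda>X. X) -` G \<inter> space (restrict_space N F) \<in> sets (restrict_space N F)"
      using measurable_sets[OF counts[OF A], of B] by simp
  qed
  from measurable_sets[OF this E]
  have "E \<inter> space (restrict_space N F) \<in> sets (restrict_space N F)" by simp
  moreover have "space (restrict_space N F) = F"
    using sets.sets_into_space[OF F] by (auto simp: space_restrict_space)
  ultimately show ?thesis using F by (simp add: sets_restrict_space_iff)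
qed

definition locally_finite_configs :: "'a measure \<Rightarrow> (nat \<Rightarrow> 'a set) \<Rightarrow> 'a set set" where
  "locally_finite_configs M D = {X \<in> cnt_sets M. \<forall>n. finite (X \<inter> D n)}"

lemma locally_finite_configs_in_sets:
  assumes space: "space N = cnt_sets M"
    and counts: "\<And>n. cnt_N (D n) \<in> N \<rightarrow>\<^sub>M count_space UNIV"
  shows "locally_finite_configs M D \<in> sets N"
proof -
  have "{X \<in> space N. finite (X \<inter> D n)} \<in> sets N" for n
  proof -
    have "{X \<in> space N. finite (X \<inter> D n)} = space N - (cnt_N (D n) -` {\<infinity>} \<inter> space N)"
      by (auto simp: cnt_N_def Int_commute)
    then show ?thesis using measurable_sets[OF counts, of "{\<infinity>}"] by auto
  qed
  then have "{X \<in> space N. \<forall>n. finite (X \<inter> D n)} \<in> sets N"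
    by (rule sets.sets_Collect_countable_All)
  then show ?thesis by (simp add: locally_finite_configs_def space)
qed

lemma cr_space_trace_on_locally_finite:
  fixes D :: "nat \<Rightarrow> 'a set"
  assumes ring: "ring_of_sets (space M) R" and gen: "sigma_sets (space M) R = sets M"
    and counts: "\<And>B. B \<in> R \<Longrightarrow> cnt_N B \<in> avoid_space M R \<rightarrow>\<^sub>M count_space UNIV"
    and D: "range D \<subseteq> R" "disjoint_family D" "(\<Union>n. D n) = space M"
    and E: "E \<in> sets (cr_space M)"
  shows "E \<inter> locally_finite_configs M D \<in> sets (avoid_space M R)"
proof -
  interpret ring_of_sets "space M" R by (fact ring)
  let ?F = "locally_finite_configs M D"
  have F: "?F \<in> sets (avoid_space M R)"
    using D(1) by (intro locally_finite_configs_in_sets counts) auto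
  show ?thesis
  proof (rule cr_space_trace[OF space_avoid_space F _ E])
    fix A assume "A \<in> sets M"
    then have "points_in A \<in> borel_measurable (restrict_space (avoid_space M R) ?F)"
      using gen counts D unfolding cnt_N_measurable_iff_points_in
      by (intro points_in_measurable_locally_finite[where \<Omega> = "space M" and R = R and D = D])
        (auto simp: locally_finite_configs_def Int_stable_def space_closed)
    then show "cnt_N A \<in> restrict_space (avoid_space M R) ?F \<rightarrow>\<^sub>M count_space UNIV"
      by (simp add: cnt_N_measurable_iff_points_in)
  qed
qed

lemma sigma_finite_disjoint_cover:
  fixes M :: "'a measure"
  assumes ring: "ring_of_sets (space M) R" and sf: "cr_sigma_finite_on M \<Omega> \<pi> R"
  shows "\<exists>D :: nat \<Rightarrow> 'a set. range D \<subseteq> R \<and> disjoint_family D \<and> (\<Union>n. D n) = space M \<and>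
    (\<forall>\<omega>\<in>\<Omega>. \<forall>n. finite (\<pi> \<omega> \<inter> D n))"
proof -
  obtain An :: "nat \<Rightarrow> 'a set" where An: "range An \<subseteq> R" "space M = (\<Union>n. An n)"
    "\<forall>\<omega>\<in>\<Omega>. \<forall>n. finite (\<pi> \<omega> \<inter> An n)"
    using sf unfolding cr_sigma_finite_on_def by (elim exE conjE) (rule that)
  have "finite (\<pi> \<omega> \<inter> disjointed An n)" if "\<omega> \<in> \<Omega>" for \<omega> n
    by (rule finite_subset[of _ "\<pi> \<omega> \<inter> An n"]) (use An(3) that disjointed_subset[of An n] in auto)
  moreover have "range (disjointed An) \<subseteq> R"
    by (rule ring_of_sets.range_disjointed_sets[OF ring An(1)])
  ultimately show ?thesis
    using An(2) disjoint_family_disjointed[of An] UN_disjointed_eq[of An] by metis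
qed

theorem theorem1p3:
  fixes M :: "'a measure" and P :: "'b measure" and R :: "'a set set"
    and \<pi>1 \<pi>2 :: "'b \<Rightarrow> 'a set"
  assumes "prob_space P"
    and "{(x, x) | x. x \<in> space M} \<in> sets (M \<Otimes>\<^sub>M M)"
    and "ring_of_sets (space M) R"
    and "sigma_sets (space M) R = sets M"
    and "\<pi>1 \<in> P \<rightarrow>\<^sub>M cr_space M"
    and "\<pi>2 \<in> P \<rightarrow>\<^sub>M cr_space M"
    and "\<And>A. A \<in> R \<Longrightarrow>
           measure P {\<omega> \<in> space P. \<pi>1 \<omega> \<inter> A \<noteq> {}} = measure P {\<omega> \<in> space P. \<pi>2 \<omega> \<inter> A \<noteq> {}}"
    and "cr_sigma_finite_on M (space P) \<pi>1 R"
  shows "distr P (cr_space M) \<pi>1 = distr P (cr_space M) \<pi>2"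
proof -
  note ring = assms(3) and gen = assms(4) and \<pi>1 = assms(5) and \<pi>2 = assms(6)
  obtain R0 where R0: "R0 \<subseteq> R" "countable R0" "separates_points R0 (space M)"
    using separating_generators_of_diagonal[OF assms(2) gen] by blast
  note counts = cnt_N_measurable_avoid_space[OF ring R0]
  obtain D :: "nat \<Rightarrow> 'a set" where D: "range D \<subseteq> R" "disjoint_family D" "(\<Union>n. D n) = space M"
    and loc_fin: "\<forall>\<omega>\<in>space P. \<forall>n. finite (\<pi>1 \<omega> \<inter> D n)"
    using sigma_finite_disjoint_cover[OF ring assms(8)] by blast
  let ?F = "locally_finite_configs M D"
  have F: "?F \<in> sets (avoid_space M R)"
    using D(1) by (intro locally_finite_configs_in_sets counts) auto
  have supp: "\<pi>1 \<omega> \<in> ?F" if "\<omega> \<in> space P" for \<omega>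
    using loc_fin measurable_space[OF \<pi>1 that] that by (simp add: locally_finite_configs_def)
  have R_sets: "R \<subseteq> sets M" using gen by auto
  note avoid = measurable_avoid_space[OF R_sets]
  have "distr P (avoid_space M R) \<pi>1 = distr P (avoid_space M R) \<pi>2"
    by (rule distr_avoid_space_eq[OF assms(1) ring avoid[OF \<pi>1] avoid[OF \<pi>2] assms(7)])
  from distr_eq_from_trace[OF \<pi>1 \<pi>2 avoid[OF \<pi>1] avoid[OF \<pi>2] F
      cr_space_trace_on_locally_finite[OF ring gen counts D] supp this]
  show ?thesis .
qed

end
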